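(* Let $H$ be an infinite-dimensional complex separable Hilbert space and let $T\in\mathcal{B}(H)$ be idempotent, i.e. $T^2=T$. Then the following are equivalent: (i) $T\in\mathcal{AN}(H)$; (ii) either the range $R(T)$ or the kernel $N(T)$ is finite dimensional; (iii) $T\in\mathcal{AM}(H)$; (iv) $T\in\overline{\mathcal{AN}(H)}$.
   Context: $\mathcal{B}(H)$ denotes bounded linear operators on $H$ with the operator norm. $T\in\mathcal{B}(H)$ is norm attaining if $\|Tx\|=\|T\|$ for some unit vector $x$; $T\in\mathcal{AN}(H)$ (absolutely norm attaining) if for every nonzero closed subspace $M\subseteq H$ the restriction $T|_M:M\to H$ is norm attaining. The minimum modulus is $m(T)=\inf\{\|Tx\|:\|x\|=1\}$; $T$ is minimum attaining if $\|Tx\|=m(T)$ for some unit vector $x$; $T\in\mathcal{AM}(H)$ (absolutely minimum attaining) if for every nonzero closed subspace $M\subseteq H$ the restriction $T|_M$ is minimum attaining. $\overline{\mathcal{AN}(H)}$ is the operator-norm closure of $\mathcal{AN}(H)$. *)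

theory Defs
  imports "HOL-Analysis.Analysis"
begin

class complex_vector = real_vector +
  fixes scaleC :: "complex \<Rightarrow> 'a \<Rightarrow> 'a" (infixr \<open>*\<^sub>C\<close> 75)
  assumes scaleC_add_right: "a *\<^sub>C (x + y) = a *\<^sub>C x + a *\<^sub>C y"
    and scaleC_add_left: "(a + b) *\<^sub>C x = a *\<^sub>C x + b *\<^sub>C x"
    and scaleC_scaleC: "a *\<^sub>C (b *\<^sub>C x) = (a * b) *\<^sub>C x"
    and scaleC_one: "1 *\<^sub>C x = x"
    and scaleR_scaleC: "scaleR r = scaleC (complex_of_real r)"

class complex_normed_vector = complex_vector + real_normed_vector +
  assumes norm_scaleC: "norm (a *\<^sub>C x) = cmod a * norm x"

class complex_inner = complex_normed_vector + sgn_div_norm + dist_norm + uniformity_dist + open_uniformity +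
  fixes cinner :: "'a \<Rightarrow> 'a \<Rightarrow> complex"
  assumes cinner_commute: "cinner x y = cnj (cinner y x)"
    and cinner_add_left: "cinner (x + y) z = cinner x z + cinner y z"
    and cinner_scaleC_left: "cinner (r *\<^sub>C x) y = cnj r * cinner x y"
    and cinner_ge_zero: "0 \<le> Re (cinner x x)"
    and cinner_eq_zero_iff: "cinner x x = 0 \<longleftrightarrow> x = 0"
    and norm_eq_sqrt_cinner: "norm x = sqrt (Re (cinner x x))"

class chilbert_space = complex_inner + complete_space

text \<open>Non-vacuity: the complex numbers form a complex Hilbert space.\<close>

instantiation complex :: chilbert_space
begin
definition scaleC_complex :: "complex \<Rightarrow> complex \<Rightarrow> complex" where
  "scaleC_complex a x = a * x"
definition cinner_complex :: "complex \<Rightarrow> complex \<Rightarrow> complex" where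
  "cinner_complex x y = cnj x * y"
instance
proof
  fix a b x y z :: complex and r :: real
  show "a *\<^sub>C (x + y) = a *\<^sub>C x + a *\<^sub>C y" by (simp add: scaleC_complex_def algebra_simps)
  show "(a + b) *\<^sub>C x = a *\<^sub>C x + b *\<^sub>C x" by (simp add: scaleC_complex_def algebra_simps)
  show "a *\<^sub>C (b *\<^sub>C x) = (a * b) *\<^sub>C x" by (simp add: scaleC_complex_def)
  show "1 *\<^sub>C x = x" by (simp add: scaleC_complex_def)
  show "((*\<^sub>R) r :: complex \<Rightarrow> complex) = (*\<^sub>C) (complex_of_real r)"
    by (rule ext) (simp add: scaleC_complex_def scaleR_conv_of_real)
  show "norm (a *\<^sub>C x) = cmod a * norm x" by (simp add: scaleC_complex_def norm_mult)
  show "cinner x y = cnj (cinner y x)" by (simp add: cinner_complex_def)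
  show "cinner (x + y) z = cinner x z + cinner y z" by (simp add: cinner_complex_def algebra_simps)
  show "cinner (a *\<^sub>C x) y = cnj a * cinner x y" by (simp add: cinner_complex_def scaleC_complex_def)
  show "0 \<le> Re (cinner x x)" by (simp add: cinner_complex_def)
  show "(cinner x x = 0) = (x = 0)" by (simp add: cinner_complex_def)
  show "norm x = sqrt (Re (cinner x x))"
    by (simp add: cinner_complex_def cmod_def power2_eq_square)
qed
end

definition clinear :: "('a::complex_vector \<Rightarrow> 'b::complex_vector) \<Rightarrow> bool" where
  "clinear f \<longleftrightarrow> (\<forall>x y. f (x + y) = f x + f y) \<and> (\<forall>c x. f (c *\<^sub>C x) = c *\<^sub>C f x)"

definition cbounded_linear :: "('a::complex_normed_vector \<Rightarrow> 'b::complex_normed_vector) \<Rightarrow> bool" where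
  "cbounded_linear f \<longleftrightarrow> clinear f \<and> (\<exists>K. \<forall>x. norm (f x) \<le> norm x * K)"

definition csubspace :: "'a::complex_vector set \<Rightarrow> bool" where
  "csubspace M \<longleftrightarrow> 0 \<in> M \<and> (\<forall>x\<in>M. \<forall>y\<in>M. x + y \<in> M) \<and> (\<forall>c. \<forall>x\<in>M. c *\<^sub>C x \<in> M)"

definition closed_csubspace :: "'a::complex_normed_vector set \<Rightarrow> bool" where
  "closed_csubspace M \<longleftrightarrow> csubspace M \<and> closed M"

definition cspan :: "'a::complex_vector set \<Rightarrow> 'a set" where
  "cspan B = {(\<Sum>b\<in>F. c b *\<^sub>C b) | F c. finite F \<and> F \<subseteq> B}"

definition cfinite_dim :: "'a::complex_vector set \<Rightarrow> bool" where
  "cfinite_dim S \<longleftrightarrow> (\<exists>B. finite B \<and> cspan B = S)"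

definition separable_H :: "'a::metric_space itself \<Rightarrow> bool" where
  "separable_H _ \<longleftrightarrow> (\<exists>D::'a set. countable D \<and> closure D = UNIV)"

definition norm_on :: "('a::complex_normed_vector \<Rightarrow> 'b::complex_normed_vector) \<Rightarrow> 'a set \<Rightarrow> real" where
  "norm_on T M = Sup {norm (T x) | x. x \<in> M \<and> norm x = 1}"

definition min_modulus_on :: "('a::complex_normed_vector \<Rightarrow> 'b::complex_normed_vector) \<Rightarrow> 'a set \<Rightarrow> real" where
  "min_modulus_on T M = Inf {norm (T x) | x. x \<in> M \<and> norm x = 1}"

definition norm_attaining_on :: "('a::complex_normed_vector \<Rightarrow> 'b::complex_normed_vector) \<Rightarrow> 'a set \<Rightarrow> bool" where
  "norm_attaining_on T M \<longleftrightarrow> (\<exists>x\<in>M. norm x = 1 \<and> norm (T x) = norm_on T M)"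

definition min_attaining_on :: "('a::complex_normed_vector \<Rightarrow> 'b::complex_normed_vector) \<Rightarrow> 'a set \<Rightarrow> bool" where
  "min_attaining_on T M \<longleftrightarrow> (\<exists>x\<in>M. norm x = 1 \<and> norm (T x) = min_modulus_on T M)"

definition AN :: "('a::chilbert_space \<Rightarrow> 'a) set" where
  "AN = {T. cbounded_linear T \<and>
      (\<forall>M. closed_csubspace M \<and> M \<noteq> {0} \<longrightarrow> norm_attaining_on T M)}"

definition AM :: "('a::chilbert_space \<Rightarrow> 'a) set" where
  "AM = {T. cbounded_linear T \<and>
      (\<forall>M. closed_csubspace M \<and> M \<noteq> {0} \<longrightarrow> min_attaining_on T M)}"

definition AN_closure :: "('a::chilbert_space \<Rightarrow> 'a) set" where
  "AN_closure = {T. cbounded_linear T \<and> (\<forall>e>0. \<exists>S\<in>AN. onorm (\<lambda>x. T x - S x) < e)}"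

end

theory Submission
  imports Defs
begin

text \<open>
  If \<open>R(T)\<close> is finite dimensional put \<open>N = N(T)\<close>; if \<open>N(T) = span B\<close> is finite
  dimensional put \<open>N = R(T) \<inter> B\<^sup>\<bottom>\<close>. In both cases \<open>N\<close> is a closed subspace of finite
  codimension on which \<open>T\<close> acts as a scalar \<open>c \<in> {0, 1}\<close>, and \<open>T y \<bottom> T z\<close> whenever
  \<open>y \<in> N\<close> and \<open>y \<bottom> z\<close>. A closed subspace \<open>M\<close> splits orthogonally into \<open>M \<inter> N\<close> and a
  finite-dimensional \<open>W\<close>, with \<open>\<parallel>T (y + z)\<parallel>\<^sup>2 = |c|\<^sup>2 \<parallel>y\<parallel>\<^sup>2 + \<parallel>T z\<parallel>\<^sup>2\<close>. Hence every value
  of \<open>\<parallel>T x\<parallel>\<close> on the unit sphere of \<open>M\<close> is already taken on the compact unit sphere of a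
  finite-dimensional subspace of \<open>M\<close>, and both the norm and the minimum modulus of \<open>T|\<^sub>M\<close>
  are attained: \<open>T\<close> lies in \<open>AN(H)\<close>, in its closure and in \<open>AM(H)\<close>.

  Conversely let \<open>R(T)\<close> and \<open>N(T)\<close> be infinite dimensional and \<open>\<parallel>S - T\<parallel> \<le> 1/8\<close>
  (for instance \<open>S = T\<close>). Moving along segments between unit vectors of \<open>N(T)\<close> and \<open>R(T)\<close>
  and using the intermediate value theorem one builds inductively an orthonormal sequence
  \<open>u\<^sub>n\<close> such that the \<open>S u\<^sub>n\<close> are pairwise orthogonal and \<open>\<parallel>S u\<^sub>n\<parallel> = t\<^sub>n\<close> for any
  prescribed \<open>t\<^sub>n \<in> [1/8, 7/8]\<close>. On the closed span \<open>M\<close> of the \<open>u\<^sub>n\<close> the form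
  \<open>L\<^sup>2 \<parallel>x\<parallel>\<^sup>2 - \<parallel>S x\<parallel>\<^sup>2\<close> is definite when all \<open>t\<^sub>n\<close> lie on one side of \<open>L\<close>, so for
  \<open>t\<^sub>n \<longrightarrow> 1/2\<close> from below (above) the value \<open>1/2\<close> is the norm (minimum modulus) of \<open>S|\<^sub>M\<close>
  without being attained. Thus \<open>S \<notin> AN(H) \<union> AM(H)\<close>.
\<close>

section \<open>Complex inner product spaces\<close>

global_interpretation cvs: vector_space "scaleC :: complex \<Rightarrow> 'a \<Rightarrow> 'a::complex_vector"
  by unfold_locales (simp_all add: scaleC_add_right scaleC_add_left scaleC_scaleC scaleC_one)

lemma cspan_eq_span: "cspan = cvs.span"
  by (rule ext) (simp add: cspan_def cvs.span_explicit)

lemma csubspace_eq_subspace: "csubspace = cvs.subspace"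
  by (rule ext) (simp add: csubspace_def cvs.subspace_def)

lemma cinner_scaleC_right: "cinner x (r *\<^sub>C y) = r * cinner x y"
  by (metis cinner_commute cinner_scaleC_left complex_cnj_cnj complex_cnj_mult)

lemma cinner_add_right: "cinner x (y + z) = cinner x y + cinner x z"
  by (metis cinner_commute cinner_add_left complex_cnj_add)

lemma cinner_zero_left [simp]: "cinner 0 x = 0"
  using cinner_add_left[of 0 0 x] by simp

lemma cinner_zero_right [simp]: "cinner x 0 = 0"
  using cinner_add_right[of x 0 0] by simp

lemma cinner_diff_right: "cinner x (y - z) = cinner x y - cinner x z"
  using cinner_add_right[of x "y - z" z] by simp

lemma cinner_minus_right: "cinner x (- y) = - cinner x y"
  using cinner_diff_right[of x 0 y] by simp

lemma cinner_scaleR_right: "cinner x (r *\<^sub>R y) = r * cinner x y"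
  by (simp add: scaleR_scaleC cinner_scaleC_right)

lemma cinner_sum_right: "cinner x (sum f A) = (\<Sum>a\<in>A. cinner x (f a))"
  by (induct A rule: infinite_finite_induct) (auto simp: cinner_add_right)

lemma cinner_eq_zero_commute: "cinner x y = 0 \<longleftrightarrow> cinner y x = 0"
  by (metis cinner_commute complex_cnj_zero_iff)

lemma cinner_self_eq_norm_power2: "cinner x x = complex_of_real ((norm x)^2)"
proof -
  have "Im (cinner x x) = 0"
    using cinner_commute[of x x] by (metis cnj.sel(2) equation_minus_iff minus_equation_iff neg_equal_zero)
  moreover have "Re (cinner x x) = (norm x)^2"
    using norm_eq_sqrt_cinner[of x] cinner_ge_zero[of x] by simp
  ultimately show ?thesis by (simp add: complex_eq_iff)
qed

lemma power2_norm_add_cinner: "(norm (x + y))^2 = (norm x)^2 + (norm y)^2 + 2 * Re (cinner x y)"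
proof -
  have "Re (cinner y x) = Re (cinner x y)"
    using cinner_commute[of y x] by simp
  then show ?thesis
    using cinner_self_eq_norm_power2[of "x + y"] cinner_self_eq_norm_power2[of x]
      cinner_self_eq_norm_power2[of y]
    by (simp add: cinner_add_left cinner_add_right complex_eq_iff)
qed

lemma power2_norm_diff_cinner: "(norm (x - y))^2 = (norm x)^2 + (norm y)^2 - 2 * Re (cinner x y)"
  using power2_norm_add_cinner[of x "- y"] by (simp add: cinner_minus_right)

lemma norm_add_Pythagorean_cinner: "cinner x y = 0 \<Longrightarrow> (norm (x + y))^2 = (norm x)^2 + (norm y)^2"
  by (simp add: power2_norm_add_cinner)

lemma parallelogram_law_cinner:
  "(norm (x + y))^2 + (norm (x - y))^2 = 2 * (norm x)^2 + 2 * (norm (y::'a::complex_inner))^2"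
  using power2_norm_add_cinner[of x y] power2_norm_diff_cinner[of x y] by simp

lemma Cauchy_Schwarz_cinner: "cmod (cinner x y) \<le> norm x * norm y"
proof (cases "y = 0")
  case False
  define c where "c = cinner x y"
  define n where "n = (norm y)^2"
  define t where "t = cnj c / complex_of_real n"
  have n: "n > 0" using False by (simp add: n_def)
  have "Re (cinner x (t *\<^sub>C y)) = (cmod c)^2 / n"
    by (simp add: cinner_scaleC_right t_def flip: c_def) (simp add: cmod_power2 flip: power2_eq_square)
  moreover have "(norm (t *\<^sub>C y))^2 = (cmod c)^2 / n"
  proof -
    have "cmod t = cmod c / n" using n by (simp add: t_def norm_divide)
    then show ?thesis using n by (simp add: norm_scaleC power_mult_distrib n_def power2_eq_square)
  qed
  ultimately have "0 \<le> (norm x)^2 - (cmod c)^2 / n"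
    using power2_norm_diff_cinner[of x "t *\<^sub>C y"] by (smt (verit) zero_le_power2)
  then have "(cmod c)^2 \<le> (norm x * norm y)^2"
    using n by (simp add: field_simps power_mult_distrib n_def)
  then show ?thesis unfolding c_def by (rule power2_le_imp_le) simp
qed simp

lemma clinear_add: "clinear T \<Longrightarrow> T (x + y) = T x + T y"
  by (simp add: clinear_def)

lemma clinear_scaleC: "clinear T \<Longrightarrow> T (c *\<^sub>C x) = c *\<^sub>C T x"
  by (simp add: clinear_def)

lemma clinear_scaleR: "clinear T \<Longrightarrow> T (r *\<^sub>R x) = r *\<^sub>R T x"
  by (simp add: clinear_def scaleR_scaleC)

lemma linear_if_clinear: "clinear T \<Longrightarrow> linear T"
  by (rule linearI) (simp_all add: clinear_add clinear_scaleR)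

lemma clinear_zero: "clinear T \<Longrightarrow> T 0 = 0"
  using linear_if_clinear linear_0 by blast

lemma clinear_diff: "clinear T \<Longrightarrow> T (x - y) = T x - T y"
  using linear_if_clinear linear_diff by blast

lemma clinear_sum: "clinear T \<Longrightarrow> T (sum f A) = (\<Sum>a\<in>A. T (f a))"
  using linear_if_clinear linear_sum by blast

lemma clinear_compose: "clinear f \<Longrightarrow> clinear g \<Longrightarrow> clinear (g \<circ> f)"
  by (simp add: clinear_def)

lemma clinear_cinner_right: "clinear (cinner a)"
  by (simp add: clinear_def cinner_add_right cinner_scaleC_right scaleC_complex_def)

lemma clinear_id_minus: "clinear T \<Longrightarrow> clinear (\<lambda>x. x - T x)"
  by (simp add: clinear_def cvs.scale_right_diff_distrib)

lemma cbounded_linear_iff: "cbounded_linear T \<longleftrightarrow> clinear T \<and> bounded_linear T"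
proof
  assume "cbounded_linear T"
  then obtain K where "clinear T" "\<And>x. norm (T x) \<le> norm x * K"
    by (auto simp: cbounded_linear_def)
  then show "clinear T \<and> bounded_linear T"
    by (auto intro!: bounded_linear_intro[where K=K] simp: clinear_add clinear_scaleR)
next
  assume "clinear T \<and> bounded_linear T"
  then show "cbounded_linear T"
    unfolding cbounded_linear_def using bounded_linear.bounded by blast
qed

lemma cbounded_linear_continuous_on: "cbounded_linear T \<Longrightarrow> continuous_on S T"
  by (simp add: cbounded_linear_iff linear_continuous_on)

lemma cbounded_linear_id_minus:
  assumes "cbounded_linear T"
  shows "cbounded_linear (\<lambda>x. x - T x)"
proof -
  have "clinear T" "bounded_linear T" using assms by (simp_all add: cbounded_linear_iff)
  have "clinear (\<lambda>x. x - T x)" using \<open>clinear T\<close> by (rule clinear_id_minus)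
  moreover have "bounded_linear (\<lambda>x. x - T x)"
    using \<open>bounded_linear T\<close> by (rule bounded_linear_sub[OF bounded_linear_ident])
  ultimately show ?thesis by (simp add: cbounded_linear_iff)
qed

lemma bounded_linear_cinner_right: "bounded_linear (\<lambda>x::'a::complex_inner. cinner a x)"
proof (rule bounded_linear_intro[where K="norm a"])
  show "norm (cinner a x) \<le> norm x * norm a" for x
    using Cauchy_Schwarz_cinner[of a x] by (simp only: mult.commute)
qed (simp_all add: cinner_add_right cinner_scaleR_right scaleR_conv_of_real)

lemma continuous_on_cinner_right [continuous_intros]:
  "continuous_on S (\<lambda>x::'a::complex_inner. cinner a x)"
  by (rule linear_continuous_on[OF bounded_linear_cinner_right])

lemma bounded_linear_scaleC_right: "bounded_linear (\<lambda>x::'a::complex_normed_vector. c *\<^sub>C x)"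
  by (rule bounded_linear_intro[where K="cmod c"])
    (simp_all add: scaleC_add_right scaleR_scaleC scaleC_scaleC mult.commute norm_scaleC)

lemma bounded_linear_scaleC_left: "bounded_linear (\<lambda>c. c *\<^sub>C (x::'a::complex_normed_vector))"
  by (rule bounded_linear_intro[where K="norm x"])
    (simp_all add: scaleC_add_left scaleR_scaleC scaleC_scaleC scaleC_complex_def norm_scaleC)

lemma csubspace_0: "csubspace A \<Longrightarrow> 0 \<in> A"
  by (simp add: csubspace_def)

lemma csubspace_add: "csubspace A \<Longrightarrow> x \<in> A \<Longrightarrow> y \<in> A \<Longrightarrow> x + y \<in> A"
  by (simp add: csubspace_def)

lemma csubspace_scaleC: "csubspace A \<Longrightarrow> x \<in> A \<Longrightarrow> c *\<^sub>C x \<in> A"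
  by (simp add: csubspace_def)

lemma csubspace_scaleR: "csubspace A \<Longrightarrow> x \<in> A \<Longrightarrow> r *\<^sub>R x \<in> A"
  by (simp add: csubspace_def scaleR_scaleC)

lemma csubspace_diff: "csubspace A \<Longrightarrow> x \<in> A \<Longrightarrow> y \<in> A \<Longrightarrow> x - y \<in> A"
  by (simp add: csubspace_eq_subspace cvs.subspace_diff)

lemma csubspace_UNIV: "csubspace UNIV"
  by (simp add: csubspace_def)

lemma csubspace_Int: "csubspace A \<Longrightarrow> csubspace B \<Longrightarrow> csubspace (A \<inter> B)"
  by (auto simp: csubspace_def)

lemma csubspace_cspan: "csubspace (cspan B)"
  by (simp add: csubspace_eq_subspace cspan_eq_span)

lemma csubspace_kernel: "clinear T \<Longrightarrow> csubspace {x. T x = 0}"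
  by (auto simp: csubspace_def clinear_add clinear_scaleC clinear_zero)

lemma csubspace_image:
  assumes T: "clinear T" and V: "csubspace V"
  shows "csubspace (T ` V)"
  unfolding csubspace_def
proof (intro conjI ballI allI)
  show "0 \<in> T ` V"
    using clinear_zero[OF T] csubspace_0[OF V] by (metis image_eqI)
  show "x + y \<in> T ` V" if xy: "x \<in> T ` V" "y \<in> T ` V" for x y
  proof -
    obtain a b where "a \<in> V" "b \<in> V" "x = T a" "y = T b" using xy by blast
    then show ?thesis using csubspace_add[OF V] clinear_add[OF T] by (metis image_eqI)
  qed
  show "c *\<^sub>C x \<in> T ` V" if x: "x \<in> T ` V" for c x
  proof -
    obtain a where "a \<in> V" "x = T a" using x by blast
    then show ?thesis using csubspace_scaleC[OF V] clinear_scaleC[OF T] by (metis image_eqI)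
  qed
qed

lemma csubspace_orthogonal: "csubspace {x::'a::complex_inner. \<forall>y\<in>A. cinner y x = 0}"
  by (auto simp: csubspace_def cinner_add_right cinner_scaleC_right)

lemma closed_kernel: "cbounded_linear T \<Longrightarrow> closed {x. T x = 0}"
  using closed_Collect_eq[OF cbounded_linear_continuous_on continuous_on_const] by blast

lemma closed_orthogonal: "closed {x::'a::complex_inner. \<forall>y\<in>A. cinner y x = 0}"
proof -
  have "closed {x::'a. cinner y x = 0}" for y
    by (intro closed_Collect_eq continuous_intros)
  then show ?thesis unfolding Collect_ball_eq by blast
qed

lemma closed_csubspace_closure:
  fixes S :: "'a::complex_normed_vector set"
  assumes S: "csubspace S"
  shows "closed_csubspace (closure S)"
proof -
  have invariant: "f x \<in> closure S" if f: "continuous_on UNIV f"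
    and fS: "\<And>y. y \<in> S \<Longrightarrow> f y \<in> closure S" and x: "x \<in> closure S" for f x
  proof -
    have "f ` closure S \<subseteq> closure S"
      by (rule image_closure_subset[OF continuous_on_subset[OF f subset_UNIV] closed_closure])
        (use fS in blast)
    then show ?thesis using x by blast
  qed
  have add_S: "x + y \<in> closure S" if x: "x \<in> closure S" and y: "y \<in> S" for x y
  proof (rule invariant[of "\<lambda>x. x + y", OF _ _ x])
    show "continuous_on UNIV (\<lambda>x. x + y)"
      by (rule continuous_on_add[OF continuous_on_id continuous_on_const])
    show "z + y \<in> closure S" if "z \<in> S" for z
      using closure_subset csubspace_add[OF S that y] by blast
  qed
  have add: "x + y \<in> closure S" if x: "x \<in> closure S" and y: "y \<in> closure S" for x y
  proof (rule invariant[of "\<lambda>y. x + y", OF _ _ y])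
    show "continuous_on UNIV (\<lambda>y. x + y)"
      by (rule continuous_on_add[OF continuous_on_const continuous_on_id])
    show "x + z \<in> closure S" if "z \<in> S" for z
      using add_S[OF x that] .
  qed
  have scale: "c *\<^sub>C x \<in> closure S" if x: "x \<in> closure S" for c x
  proof (rule invariant[of "\<lambda>x. c *\<^sub>C x", OF _ _ x])
    show "continuous_on UNIV (\<lambda>x::'a. c *\<^sub>C x)"
      by (rule linear_continuous_on[OF bounded_linear_scaleC_right])
    show "c *\<^sub>C z \<in> closure S" if "z \<in> S" for z
      using closure_subset csubspace_scaleC[OF S that] by blast
  qed
  have "0 \<in> closure S"
    using closure_subset csubspace_0[OF S] by blast
  then show ?thesis
    unfolding closed_csubspace_def csubspace_def using add scale closed_closure by blast
qed

lemma csubspace_has_unit: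
  assumes "csubspace M" "M \<noteq> {0}"
  shows "\<exists>x\<in>M. norm x = 1"
proof -
  obtain x where "x \<in> M" "x \<noteq> 0" using assms csubspace_0 by auto
  then show ?thesis using assms(1) by (intro bexI[of _ "(1 / norm x) *\<^sub>R x"]) (auto simp: csubspace_scaleR)
qed

section \<open>Orthogonal projection\<close>

lemma cinner_zero_if_norm_minimal:
  fixes v k :: "'a::complex_inner"
  assumes min: "\<And>t::complex. (norm v)^2 \<le> (norm (v - t *\<^sub>C k))^2"
  shows "cinner v k = 0"
proof (rule ccontr)
  assume nz: "cinner v k \<noteq> 0"
  define q where "q = (cmod (cinner v k))^2"
  define s where "s = 1 / ((norm k)^2 + 1)"
  define t where "t = complex_of_real s * cnj (cinner v k)"
  have q: "q > 0" using nz by (simp add: q_def)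
  have pos: "(norm k)^2 + 1 > 0" by (simp add: add_nonneg_pos)
  then have s: "s > 0" and sk: "s * (norm k)^2 < 1" by (simp_all add: s_def field_simps)
  have "Re (cinner v (t *\<^sub>C k)) = s * q"
    by (simp add: cinner_scaleC_right t_def q_def cmod_power2 flip: power2_eq_square)
      (simp add: power2_eq_square algebra_simps)
  moreover have "(norm (t *\<^sub>C k))^2 = s^2 * q * (norm k)^2"
    using s by (simp add: t_def q_def norm_scaleC norm_mult power_mult_distrib)
  ultimately have "0 \<le> s^2 * q * (norm k)^2 - 2 * (s * q)"
    using min[of t] power2_norm_diff_cinner[of v "t *\<^sub>C k"] by simp
  also have "\<dots> = (s * q) * (s * (norm k)^2 - 2)"
    by (simp add: algebra_simps power2_eq_square)
  also have "\<dots> < 0" using s q sk by (intro mult_pos_neg) auto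
  finally show False by simp
qed

text \<open>By the parallelogram law
  \<open>\<parallel>k m - k n\<parallel>\<^sup>2 = 2 \<parallel>x - k m\<parallel>\<^sup>2 + 2 \<parallel>x - k n\<parallel>\<^sup>2 - 4 \<parallel>x - (k m + k n) / 2\<parallel>\<^sup>2\<close>,
  and the last term is at least \<open>4 d\<close> since the midpoint lies in \<open>K\<close>.\<close>
lemma Cauchy_if_minimizing_sequence:
  fixes K :: "'a::complex_inner set"
  assumes K: "csubspace K" and kK: "\<And>n. k n \<in> K"
    and d: "\<And>y. y \<in> K \<Longrightarrow> d \<le> (norm (x - y))^2"
    and k: "\<And>n. (norm (x - k n))^2 < d + 1 / (real n + 1)"
  shows "Cauchy k"
proof (rule metric_CauchyI)
  fix e :: real assume e: "e > 0"
  obtain N :: nat where N: "4 / e^2 < real N" using reals_Archimedean2 by blast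
  have "dist (k m) (k n) < e" if mn: "m \<ge> N" "n \<ge> N" for m n
  proof -
    define mid where "mid = (1/2::real) *\<^sub>R (k m + k n)"
    have "mid \<in> K" unfolding mid_def using kK K by (simp add: csubspace_scaleR csubspace_add)
    moreover have "(x - k m) + (x - k n) = 2 *\<^sub>R (x - mid)"
      by (simp add: mid_def algebra_simps scaleR_2)
    ultimately have mid: "4 * d \<le> (norm ((x - k m) + (x - k n)))^2"
      using d[of mid] by (simp add: power_mult_distrib)
    have "(norm (k n - k m))^2 = 2 * (norm (x - k m))^2 + 2 * (norm (x - k n))^2
        - (norm ((x - k m) + (x - k n)))^2"
      using parallelogram_law_cinner[of "x - k m" "x - k n"] by simp
    also have "\<dots> < 2 / (real m + 1) + 2 / (real n + 1)"
      using k[of m] k[of n] mid by simp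
    also have "\<dots> \<le> 2 / (real N + 1) + 2 / (real N + 1)"
      using mn by (intro add_mono divide_left_mono) auto
    also have "\<dots> = 4 / (real N + 1)" by simp
    also have "\<dots> < e^2"
    proof -
      have "4 < real N * e^2" using N e by (simp add: divide_less_eq)
      moreover have "0 < e^2" using e by simp
      ultimately have "4 < real N * e^2 + e^2" by linarith
      then have "4 < (real N + 1) * e^2" by (simp add: distrib_right)
      then show ?thesis by (simp add: divide_less_eq algebra_simps)
    qed
    finally have "(norm (k n - k m))^2 < e^2" .
    then show ?thesis using e by (simp add: dist_norm norm_minus_commute power_less_imp_less_base)
  qed
  then show "\<exists>M. \<forall>m\<ge>M. \<forall>n\<ge>M. dist (k m) (k n) < e" by blast
qed

lemma exists_orthogonal_projection:
  fixes K :: "'a::chilbert_space set"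
  assumes K: "closed_csubspace K"
  shows "\<exists>p\<in>K. \<forall>k\<in>K. cinner k (x - p) = 0"
proof -
  have Ks: "csubspace K" and Kc: "closed K" using K by (auto simp: closed_csubspace_def)
  define d where "d = Inf {(norm (x - k))^2 | k. k \<in> K}"
  have d: "d \<le> (norm (x - k))^2" if "k \<in> K" for k
    unfolding d_def by (rule cInf_lower) (use that in \<open>auto intro: bdd_belowI[of _ 0]\<close>)
  have "\<exists>k\<in>K. (norm (x - k))^2 < d + 1 / (real n + 1)" for n
  proof -
    have "{(norm (x - k))^2 | k. k \<in> K} \<noteq> {}" using csubspace_0[OF Ks] by blast
    from cInf_lessD[OF this] show ?thesis unfolding d_def by force
  qed
  then obtain k where kK: "\<And>n. k n \<in> K" and k: "\<And>n. (norm (x - k n))^2 < d + 1 / (real n + 1)"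
    by metis
  have "Cauchy k" using Cauchy_if_minimizing_sequence[OF Ks kK d k] by blast
  then obtain p where p: "k \<longlonglongrightarrow> p" using Cauchy_convergent_iff convergent_def by blast
  have pK: "p \<in> K" using closed_sequentially[OF Kc] kK p by blast
  have "(norm (x - p))^2 \<le> d"
  proof (rule tendsto_le[OF sequentially_bot])
    show "(\<lambda>n. d + 1 / (real n + 1)) \<longlonglongrightarrow> d"
      using tendsto_add[OF tendsto_const LIMSEQ_inverse_real_of_nat_add[of 0]]
      by (simp add: inverse_eq_divide add.commute)
    show "(\<lambda>n. (norm (x - k n))^2) \<longlonglongrightarrow> (norm (x - p))^2"
      by (intro tendsto_intros p)
    show "\<forall>\<^sub>F n in sequentially. (norm (x - k n))^2 \<le> d + 1 / (real n + 1)"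
      using k by (intro always_eventually allI less_imp_le)
  qed
  then have "cinner (x - p) k = 0" if "k \<in> K" for k
    using that pK Ks d[of "p + _ *\<^sub>C k"]
    by (intro cinner_zero_if_norm_minimal) (smt (verit) csubspace_add csubspace_scaleC diff_diff_eq)
  then show ?thesis using pK cinner_eq_zero_commute by blast
qed

section \<open>Finite-dimensional subspaces\<close>

lemma cfinite_dim_zero: "cfinite_dim {0}"
  unfolding cfinite_dim_def cspan_eq_span by (intro exI[of _ "{}"]) simp

lemma cfinite_dim_if_finite_rank_kernel:
  fixes L :: "'a::complex_vector \<Rightarrow> 'b::complex_vector"
  assumes V: "csubspace V" and L: "clinear L" and B: "finite B" and LV: "L ` V \<subseteq> cspan B"
    and K: "cfinite_dim (V \<inter> {x. L x = 0})"
  shows "cfinite_dim V"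
proof -
  have "cvs.subspace (L ` V)"
    using csubspace_image[OF L V] by (simp add: csubspace_eq_subspace)
  obtain C where C: "C \<subseteq> L ` V" "cvs.independent C" "L ` V \<subseteq> cvs.span C"
    by (rule cvs.basis_exists)
  have fC: "finite C"
    using cvs.independent_span_bound[OF B C(2)] C(1) LV by (auto simp: cspan_eq_span)
  have "\<forall>c\<in>C. \<exists>v. v \<in> V \<and> L v = c" using C(1) by blast
  then obtain w where "\<forall>c\<in>C. w c \<in> V \<and> L (w c) = c"
    by (rule bchoice[THEN exE]) blast
  then have w: "\<And>c. c \<in> C \<Longrightarrow> w c \<in> V \<and> L (w c) = c" by blast
  obtain D where D: "finite D" "cvs.span D = V \<inter> {x. L x = 0}"
    using K by (auto simp: cfinite_dim_def cspan_eq_span)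
  have "cvs.span (D \<union> w ` C) = V"
  proof
    have "D \<union> w ` C \<subseteq> V" using D(2) cvs.span_superset[of D] w by auto
    then show "cvs.span (D \<union> w ` C) \<subseteq> V"
      using V by (simp add: cvs.span_minimal csubspace_eq_subspace)
  next
    show "V \<subseteq> cvs.span (D \<union> w ` C)"
    proof
      fix x assume x: "x \<in> V"
      obtain u where u: "L x = (\<Sum>c\<in>C. u c *\<^sub>C c)"
        using x C(3) cvs.span_finite[OF fC] by blast
      define y where "y = (\<Sum>c\<in>C. u c *\<^sub>C w c)"
      have "y \<in> V" unfolding y_def using w V
        by (intro cvs.subspace_sum) (auto simp: csubspace_eq_subspace intro: cvs.subspace_scale)
      moreover have "L y = L x" unfolding y_def u using w
        by (simp add: clinear_sum[OF L] clinear_scaleC[OF L])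
      ultimately have "x - y \<in> cvs.span D"
        using x V D(2) by (simp add: csubspace_diff clinear_diff[OF L])
      moreover have "y \<in> cvs.span (w ` C)" unfolding y_def
        by (intro cvs.span_sum cvs.span_scale cvs.span_base) auto
      ultimately have "(x - y) + y \<in> cvs.span (D \<union> w ` C)"
        by (meson cvs.span_add cvs.span_mono subsetD sup.cobounded1 sup.cobounded2)
      then show "x \<in> cvs.span (D \<union> w ` C)" by simp
    qed
  qed
  then show ?thesis
    unfolding cfinite_dim_def cspan_eq_span using D(1) fC by (intro exI[of _ "D \<union> w ` C"]) simp
qed

lemma infinite_dim_Int_kernel_functional:
  fixes \<phi> :: "'a::complex_vector \<Rightarrow> complex"
  assumes V: "csubspace V" and \<phi>: "clinear \<phi>" and inf: "\<not> cfinite_dim V"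
  shows "\<not> cfinite_dim (V \<inter> {x. \<phi> x = 0})"
proof
  have "z \<in> cspan {1}" for z :: complex
  proof -
    have "z *\<^sub>C (1::complex) \<in> cspan {1}"
      using cvs.span_scale[OF cvs.span_base[of 1 "{1}"], of z] by (simp add: cspan_eq_span)
    moreover have "z *\<^sub>C (1::complex) = z" by (simp add: scaleC_complex_def)
    ultimately show ?thesis by simp
  qed
  then have "\<phi> ` V \<subseteq> cspan {1}" by blast
  moreover assume "cfinite_dim (V \<inter> {x. \<phi> x = 0})"
  ultimately show False
    using cfinite_dim_if_finite_rank_kernel[OF V \<phi>] inf by blast
qed

lemma cfinite_dim_if_Int_orthogonal:
  fixes V :: "'a::complex_inner set"
  assumes "finite B" "csubspace V" "cfinite_dim (V \<inter> {x. \<forall>b\<in>B. cinner b x = 0})"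
  shows "cfinite_dim V"
  using assms
proof (induction B arbitrary: V rule: finite_induct)
  case (insert b B)
  have "csubspace (V \<inter> {x. cinner b x = 0})"
    using insert.prems(1) csubspace_kernel[OF clinear_cinner_right] by (rule csubspace_Int)
  moreover have "V \<inter> {x. cinner b x = 0} \<inter> {x. \<forall>b\<in>B. cinner b x = 0}
      = V \<inter> {x. \<forall>b'\<in>insert b B. cinner b' x = 0}" by auto
  ultimately have "cfinite_dim (V \<inter> {x. cinner b x = 0})"
    using insert.IH insert.prems(2) by simp
  then show ?case
    using infinite_dim_Int_kernel_functional[OF insert.prems(1) clinear_cinner_right] by blast
qed simp

lemma cfinite_dim_if_Int_finite_codim_trivial:
  fixes V :: "'a::complex_inner set"
  assumes V: "csubspace V" and F: "clinear F" and B: "finite B" "range F \<subseteq> cspan B"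
    and trivial: "V \<inter> {x. F x = 0} \<inter> {x. \<forall>b\<in>B. cinner b x = 0} = {0}"
  shows "cfinite_dim V"
proof -
  have "csubspace (V \<inter> {x. F x = 0})"
    using V csubspace_kernel[OF F] by (rule csubspace_Int)
  moreover have "cfinite_dim (V \<inter> {x. F x = 0} \<inter> {x. \<forall>b\<in>B. cinner b x = 0})"
    using trivial cfinite_dim_zero by simp
  ultimately have "cfinite_dim (V \<inter> {x. F x = 0})"
    by (rule cfinite_dim_if_Int_orthogonal[OF B(1)])
  moreover have "F ` V \<subseteq> cspan B" using B(2) by blast
  ultimately show ?thesis
    using cfinite_dim_if_finite_rank_kernel[OF V F B(1)] by blast
qed

definition boundedly_seq_compact :: "'a::metric_space set \<Rightarrow> bool" where
  "boundedly_seq_compact A \<longleftrightarrow> (\<forall>f::nat \<Rightarrow> 'a. (\<forall>n. f n \<in> A) \<longrightarrow> bounded (range f) \<longrightarrow>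
      (\<exists>l\<in>A. \<exists>r. strict_mono r \<and> (f \<circ> r) \<longlonglongrightarrow> l))"

lemma boundedly_seq_compactD:
  fixes f :: "nat \<Rightarrow> 'a::metric_space"
  assumes "boundedly_seq_compact A" "\<And>n. f n \<in> A" "bounded (range f)"
  shows "\<exists>l\<in>A. \<exists>r. strict_mono r \<and> (f \<circ> r) \<longlonglongrightarrow> l"
  using assms(1)[unfolded boundedly_seq_compact_def, rule_format, of f] assms(2,3) by simp

lemma closed_if_boundedly_seq_compact:
  assumes A: "boundedly_seq_compact A"
  shows "closed A"
  unfolding closed_sequential_limits
proof (intro allI impI, elim conjE)
  fix f l assume f: "\<forall>n. f n \<in> A" and l: "f \<longlonglongrightarrow> l"
  obtain l' r where "l' \<in> A" "strict_mono r" "(f \<circ> r) \<longlonglongrightarrow> l'"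
    using boundedly_seq_compactD[OF A _ convergent_imp_bounded[OF l]] f by blast
  moreover have "(f \<circ> r) \<longlonglongrightarrow> l" using LIMSEQ_subseq_LIMSEQ[OF l \<open>strict_mono r\<close>] .
  ultimately show "l \<in> A" using LIMSEQ_unique by metis
qed

lemma cspan_insert_orthogonal_direction:
  fixes c :: "'a::chilbert_space"
  assumes closed: "closed (cspan C)"
  obtains d where "d \<in> cspan (insert c C)" "\<And>v. v \<in> cspan C \<Longrightarrow> cinner v d = 0"
    "\<And>x. x \<in> cspan (insert c C) \<Longrightarrow> \<exists>a. x - a *\<^sub>C d \<in> cspan C"
proof -
  have "closed_csubspace (cspan C)"
    using closed csubspace_cspan by (simp add: closed_csubspace_def)
  then obtain p where p: "p \<in> cspan C" "\<And>v. v \<in> cspan C \<Longrightarrow> cinner v (c - p) = 0"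
    using exists_orthogonal_projection by blast
  show ?thesis
  proof
    have "cspan C \<subseteq> cspan (insert c C)"
      by (simp add: cspan_eq_span cvs.span_mono subset_insertI)
    moreover have "c \<in> cspan (insert c C)"
      by (simp add: cspan_eq_span cvs.span_base)
    ultimately show "c - p \<in> cspan (insert c C)"
      using p(1) csubspace_diff[OF csubspace_cspan] by blast
    show "\<exists>a. x - a *\<^sub>C (c - p) \<in> cspan C" if x: "x \<in> cspan (insert c C)" for x
    proof -
      obtain a where "x - a *\<^sub>C c \<in> cspan C"
        using x unfolding cspan_eq_span cvs.span_breakdown_eq by blast
      then have "(x - a *\<^sub>C c) + a *\<^sub>C p \<in> cspan C"
        using csubspace_add[OF csubspace_cspan _ csubspace_scaleC[OF csubspace_cspan p(1)]] by blast
      moreover have "(x - a *\<^sub>C c) + a *\<^sub>C p = x - a *\<^sub>C (c - p)"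
        by (simp add: cvs.scale_right_diff_distrib)
      ultimately show ?thesis by auto
    qed
  qed (rule p(2))
qed

lemma boundedly_seq_compact_cspan_insert:
  fixes c :: "'a::chilbert_space"
  assumes IH: "boundedly_seq_compact (cspan C)"
  shows "boundedly_seq_compact (cspan (insert c C))"
  unfolding boundedly_seq_compact_def
proof (intro allI impI)
  fix f :: "nat \<Rightarrow> 'a" assume f: "\<forall>n. f n \<in> cspan (insert c C)" and "bounded (range f)"
  then obtain K where K: "\<And>n. norm (f n) \<le> K" by (auto simp: bounded_iff)
  obtain d where d: "d \<in> cspan (insert c C)" "\<And>v. v \<in> cspan C \<Longrightarrow> cinner v d = 0"
    "\<And>x. x \<in> cspan (insert c C) \<Longrightarrow> \<exists>a. x - a *\<^sub>C d \<in> cspan C"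
    using cspan_insert_orthogonal_direction closed_if_boundedly_seq_compact[OF IH] by metis
  have "\<forall>n. \<exists>a. f n - a *\<^sub>C d \<in> cspan C" using d(3) f by blast
  then obtain a where wC: "\<And>n. f n - a n *\<^sub>C d \<in> cspan C" by metis
  define w where "w n = f n - a n *\<^sub>C d" for n
  have pyth: "(norm (f n))^2 = (norm (w n))^2 + (cmod (a n) * norm d)^2" for n
    using norm_add_Pythagorean_cinner[of "w n" "a n *\<^sub>C d"] d(2)[OF wC[of n]]
    by (simp add: w_def cinner_scaleC_right norm_scaleC power_mult_distrib)
  have "norm (w n) \<le> norm (f n)" and "cmod (a n) * norm d \<le> norm (f n)" for n
    by (rule power2_le_imp_le, use pyth[of n] in simp, simp)+
  then have w_bound: "norm (w n) \<le> K" and a_bound: "cmod (a n) * norm d \<le> K" for n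
    using K order.trans by metis+
  have sub: "cspan C \<subseteq> cspan (insert c C)"
    by (simp add: cspan_eq_span cvs.span_mono subset_insertI)
  show "\<exists>l\<in>cspan (insert c C). \<exists>r. strict_mono r \<and> (f \<circ> r) \<longlonglongrightarrow> l"
  proof (cases "d = 0")
    case True
    then have "\<forall>n. f n \<in> cspan C" using wC by simp
    then show ?thesis
      using boundedly_seq_compactD[OF IH] \<open>bounded (range f)\<close> sub by blast
  next
    case False
    then have "bounded (range a)"
      using a_bound by (auto simp: bounded_iff field_simps intro!: exI[of _ "K / norm d"])
    then obtain \<alpha> r1 where r1: "strict_mono r1" "(a \<circ> r1) \<longlonglongrightarrow> \<alpha>"
      using bounded_imp_convergent_subsequence by blast
    have "bounded (range (w \<circ> r1))" using w_bound by (auto simp: bounded_iff)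
    moreover have "(w \<circ> r1) n \<in> cspan C" for n
      using wC by (simp add: w_def)
    ultimately obtain l r2 where r2: "l \<in> cspan C" "strict_mono r2" "((w \<circ> r1) \<circ> r2) \<longlonglongrightarrow> l"
      using boundedly_seq_compactD[OF IH, of "w \<circ> r1"] by blast
    have "((a \<circ> r1) \<circ> r2) \<longlonglongrightarrow> \<alpha>" using LIMSEQ_subseq_LIMSEQ[OF r1(2) r2(2)] .
    then have "(\<lambda>n. ((w \<circ> r1) \<circ> r2) n + ((a \<circ> r1) \<circ> r2) n *\<^sub>C d) \<longlonglongrightarrow> l + \<alpha> *\<^sub>C d"
      by (intro tendsto_add r2(3) bounded_linear.tendsto[OF bounded_linear_scaleC_left])
    then have "(f \<circ> (r1 \<circ> r2)) \<longlonglongrightarrow> l + \<alpha> *\<^sub>C d"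
      by (simp add: w_def o_def)
    moreover have "l + \<alpha> *\<^sub>C d \<in> cspan (insert c C)"
      using r2(1) sub d(1) csubspace_cspan by (blast intro: csubspace_add csubspace_scaleC)
    ultimately show ?thesis using strict_mono_o[OF r1(1) r2(2)] by blast
  qed
qed

lemma boundedly_seq_compact_cspan:
  fixes C :: "'a::chilbert_space set"
  assumes "finite C"
  shows "boundedly_seq_compact (cspan C)"
  using assms
proof (induction C rule: finite_induct)
  case empty
  have "cspan {} = {0::'a}" by (simp add: cspan_eq_span)
  then show ?case
    by (auto simp: boundedly_seq_compact_def o_def intro!: exI[of _ id] strict_mono_id)
qed (rule boundedly_seq_compact_cspan_insert)

lemma compact_unit_sphere_cfinite_dim:
  fixes W :: "'a::chilbert_space set"
  assumes "cfinite_dim W"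
  shows "compact {z\<in>W. norm z = 1}"
  unfolding compact_eq_seq_compact_metric
proof (rule seq_compactI)
  obtain C where C: "finite C" "cspan C = W" using assms cfinite_dim_def by blast
  fix f :: "nat \<Rightarrow> 'a" assume f: "\<forall>n. f n \<in> {z\<in>W. norm z = 1}"
  then have "f n \<in> cspan C" for n using C(2) by auto
  moreover have "bounded (range f)" using f by (auto simp: bounded_iff)
  ultimately obtain l r where lr: "l \<in> cspan C" "strict_mono r" "(f \<circ> r) \<longlonglongrightarrow> l"
    using boundedly_seq_compactD[OF boundedly_seq_compact_cspan[OF C(1)]] by blast
  have "(\<lambda>n. norm ((f \<circ> r) n)) \<longlonglongrightarrow> norm l" by (intro tendsto_norm lr(3))
  moreover have "(\<lambda>n. norm ((f \<circ> r) n)) = (\<lambda>n. 1)" using f by auto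
  ultimately have "norm l = 1" using LIMSEQ_unique[OF _ tendsto_const] by metis
  then show "\<exists>l\<in>{z\<in>W. norm z = 1}. \<exists>r. strict_mono r \<and> (f \<circ> r) \<longlonglongrightarrow> l"
    using lr C(2) by blast
qed

section \<open>Attainment for idempotents of finite rank or corank\<close>

lemma cinner_cspan_eq_zero:
  assumes "\<And>b. b \<in> B \<Longrightarrow> cinner b y = 0" and "x \<in> cspan B"
  shows "cinner y x = 0"
proof -
  have "cvs.span B \<subseteq> {x. cinner y x = 0}"
    using assms(1) csubspace_kernel[OF clinear_cinner_right, of y] cinner_eq_zero_commute
    by (intro cvs.span_minimal) (auto simp: csubspace_eq_subspace)
  then show ?thesis using assms(2) by (auto simp: cspan_eq_span)
qed

lemma norm_min_attaining_on_if_reduces_to_cfinite_dim: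
  fixes T :: "'a::chilbert_space \<Rightarrow> 'b::complex_normed_vector"
  assumes T: "continuous_on UNIV T" and W: "cfinite_dim W" "W \<subseteq> M"
    and unit: "\<exists>x\<in>M. norm x = 1"
    and reduce: "\<And>x. x \<in> M \<Longrightarrow> \<exists>w\<in>W. norm w = norm x \<and> norm (T w) = norm (T x)"
  shows "norm_attaining_on T M \<and> min_attaining_on T M"
proof -
  define S where "S = {w\<in>W. norm w = 1}"
  have norms_eq: "{norm (T x) |x. x \<in> M \<and> norm x = 1} = (\<lambda>w. norm (T w)) ` S"
  proof
    show "{norm (T x) |x. x \<in> M \<and> norm x = 1} \<subseteq> (\<lambda>w. norm (T w)) ` S"
    proof
      fix v assume "v \<in> {norm (T x) |x. x \<in> M \<and> norm x = 1}"
      then obtain x where "x \<in> M" "norm x = 1" "v = norm (T x)" by blast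
      then obtain w where "w \<in> W" "norm w = 1" "v = norm (T w)" using reduce by metis
      then show "v \<in> (\<lambda>w. norm (T w)) ` S" by (auto simp: S_def)
    qed
    show "(\<lambda>w. norm (T w)) ` S \<subseteq> {norm (T x) |x. x \<in> M \<and> norm x = 1}"
      using W(2) by (auto simp: S_def)
  qed
  have ne: "S \<noteq> {}" using unit reduce by (force simp: S_def)
  have cS: "compact S" unfolding S_def by (rule compact_unit_sphere_cfinite_dim[OF W(1)])
  have cont: "continuous_on S (\<lambda>w. norm (T w))"
    by (intro continuous_on_norm continuous_on_subset[OF T]) simp
  obtain w1 where w1: "w1 \<in> S" "\<And>w. w \<in> S \<Longrightarrow> norm (T w) \<le> norm (T w1)"
    using continuous_attains_sup[OF cS ne cont] by blast
  obtain w2 where w2: "w2 \<in> S" "\<And>w. w \<in> S \<Longrightarrow> norm (T w2) \<le> norm (T w)"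
    using continuous_attains_inf[OF cS ne cont] by blast
  have "norm_on T M = norm (T w1)"
    unfolding norm_on_def norms_eq by (rule cSup_eq_maximum) (use w1 in auto)
  moreover have "min_modulus_on T M = norm (T w2)"
    unfolding min_modulus_on_def norms_eq by (rule cInf_eq_minimum) (use w2 in auto)
  ultimately show ?thesis
    using w1(1) w2(1) W(2) by (auto simp: norm_attaining_on_def min_attaining_on_def S_def)
qed

text \<open>The unit vector \<open>y\<^sub>0\<close> of \<open>M\<^sub>0\<close> carries the whole \<open>M\<^sub>0\<close>-component:
  \<open>y + z\<close> and \<open>\<parallel>y\<parallel> y\<^sub>0 + z\<close> have the same norm and the same image norm, and the
  latter lies in the finite-dimensional space spanned by \<open>y\<^sub>0\<close> and \<open>W\<close>.\<close>
lemma norm_min_attaining_on_orthogonal_sum: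
  fixes T :: "'a::chilbert_space \<Rightarrow> 'a"
  assumes T: "cbounded_linear T" and M: "csubspace M" "M \<noteq> {0}"
    and M0: "csubspace M0" "M0 \<subseteq> M" and W: "cfinite_dim W" "W \<subseteq> M"
    and split: "\<And>x. x \<in> M \<Longrightarrow> \<exists>y\<in>M0. \<exists>z\<in>W. x = y + z"
    and orth: "\<And>y z. y \<in> M0 \<Longrightarrow> z \<in> W \<Longrightarrow> cinner y z = 0"
    and scalar: "\<And>y z. y \<in> M0 \<Longrightarrow> z \<in> W \<Longrightarrow> (norm (T (y + z)))^2 = a * (norm y)^2 + (norm (T z))^2"
  shows "norm_attaining_on T M \<and> min_attaining_on T M"
proof (cases "M0 = {0}")
  case True
  then have "\<And>x. x \<in> M \<Longrightarrow> x \<in> W" using split by fastforce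
  then show ?thesis
    using norm_min_attaining_on_if_reduces_to_cfinite_dim[OF cbounded_linear_continuous_on[OF T] W]
      csubspace_has_unit[OF M] by blast
next
  case False
  then obtain y0 where y0: "y0 \<in> M0" "norm y0 = 1" using csubspace_has_unit[OF M0(1)] by blast
  obtain B where B: "finite B" "cspan B = W" using W(1) cfinite_dim_def by blast
  define W' where "W' = cspan (insert y0 B)"
  have "cfinite_dim W'" using B(1) by (auto simp: W'_def cfinite_dim_def)
  moreover have "W' \<subseteq> M"
  proof -
    have "insert y0 B \<subseteq> M"
      using y0(1) M0(2) W(2) B(2) cvs.span_superset[of B] by (auto simp: cspan_eq_span)
    then show ?thesis
      using M(1) unfolding W'_def cspan_eq_span by (simp add: cvs.span_minimal csubspace_eq_subspace)
  qed
  moreover have "\<exists>w\<in>W'. norm w = norm x \<and> norm (T w) = norm (T x)" if x: "x \<in> M" for x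
  proof -
    obtain y z where yz: "y \<in> M0" "z \<in> W" "x = y + z" using split[OF x] by blast
    define y' where "y' = norm y *\<^sub>R y0"
    have y': "y' \<in> M0" "norm y' = norm y" using y0 M0(1) by (auto simp: y'_def csubspace_scaleR)
    have "(norm (y' + z))^2 = (norm x)^2"
      using norm_add_Pythagorean_cinner[OF orth[OF yz(1,2)]]
        norm_add_Pythagorean_cinner[OF orth[OF y'(1) yz(2)]] yz(3) y'(2) by simp
    moreover have "(norm (T (y' + z)))^2 = (norm (T x))^2"
      using scalar[OF yz(1,2)] scalar[OF y'(1) yz(2)] yz(3) y'(2) by simp
    ultimately have "norm (y' + z) = norm x" "norm (T (y' + z)) = norm (T x)"
      by (simp_all add: power2_eq_iff_nonneg)
    moreover have "y' + z \<in> W'"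
    proof -
      have "y0 \<in> W'" "z \<in> W'"
        using yz(2) B(2) unfolding W'_def cspan_eq_span
        by (auto intro: cvs.span_base cvs.span_mono[THEN subsetD, rotated])
      then show ?thesis
        unfolding y'_def W'_def using csubspace_cspan csubspace_add csubspace_scaleR by metis
    qed
    ultimately show ?thesis by blast
  qed
  ultimately show ?thesis
    using norm_min_attaining_on_if_reduces_to_cfinite_dim[OF cbounded_linear_continuous_on[OF T]]
      csubspace_has_unit[OF M] by blast
qed

lemma norm_min_attaining_on_if_scalar_on_finite_codim:
  fixes T :: "'a::chilbert_space \<Rightarrow> 'a"
  assumes T: "cbounded_linear T" and N: "closed_csubspace N"
    and codim: "\<And>V. csubspace V \<Longrightarrow> V \<inter> N = {0} \<Longrightarrow> cfinite_dim V"
    and scalar: "\<And>y. y \<in> N \<Longrightarrow> T y = c *\<^sub>C y"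
    and orth: "\<And>y z. y \<in> N \<Longrightarrow> cinner y z = 0 \<Longrightarrow> cinner (T y) (T z) = 0"
    and M: "closed_csubspace M" "M \<noteq> {0}"
  shows "norm_attaining_on T M \<and> min_attaining_on T M"
proof -
  have Ms: "csubspace M" using M(1) by (simp add: closed_csubspace_def)
  define M0 where "M0 = M \<inter> N"
  have M0: "closed_csubspace M0"
    using M(1) N by (auto simp: M0_def closed_csubspace_def intro: csubspace_Int)
  define W where "W = M \<inter> {z. \<forall>y\<in>M0. cinner y z = 0}"
  have Ws: "csubspace W" unfolding W_def using Ms csubspace_orthogonal by (rule csubspace_Int)
  have "W \<inter> N \<subseteq> {0}"
    using cinner_eq_zero_iff by (auto simp: W_def M0_def)
  then have Wfd: "cfinite_dim W"
    using codim[OF Ws] Ws csubspace_0 N by (auto simp: closed_csubspace_def)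
  have split: "\<exists>y\<in>M0. \<exists>z\<in>W. x = y + z" if x: "x \<in> M" for x
  proof -
    obtain p where p: "p \<in> M0" "\<And>k. k \<in> M0 \<Longrightarrow> cinner k (x - p) = 0"
      using exists_orthogonal_projection[OF M0] by blast
    then have "x - p \<in> W" using x Ms by (auto simp: W_def M0_def csubspace_diff)
    then show ?thesis using p(1) by force
  qed
  have orth_sum: "cinner y z = 0" if "y \<in> M0" "z \<in> W" for y z
    using that by (simp add: W_def)
  have scalar_sum: "(norm (T (y + z)))^2 = (cmod c)^2 * (norm y)^2 + (norm (T z))^2"
    if "y \<in> M0" "z \<in> W" for y z
  proof -
    have y: "y \<in> N" "cinner y z = 0" using that by (auto simp: M0_def W_def)
    have "T (y + z) = c *\<^sub>C y + T z"
      using T scalar[OF y(1)] by (simp add: clinear_add cbounded_linear_iff)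
    moreover have "cinner (c *\<^sub>C y) (T z) = 0" using orth[OF y] scalar[OF y(1)] by simp
    ultimately show ?thesis
      using norm_add_Pythagorean_cinner[of "c *\<^sub>C y" "T z"]
      by (simp add: norm_scaleC power_mult_distrib)
  qed
  have "csubspace M0" "M0 \<subseteq> M" "W \<subseteq> M"
    using M0 by (auto simp: closed_csubspace_def M0_def W_def)
  then show ?thesis
    using norm_min_attaining_on_orthogonal_sum[OF T Ms M(2) _ _ Wfd _ split orth_sum scalar_sum]
    by blast
qed

lemma idempotent_norm_min_attaining_on:
  fixes T :: "'a::chilbert_space \<Rightarrow> 'a"
  assumes T: "cbounded_linear T" and idem: "T \<circ> T = T"
    and finite: "cfinite_dim (range T) \<or> cfinite_dim {x. T x = 0}"
    and M: "closed_csubspace M" "M \<noteq> {0}"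
  shows "norm_attaining_on T M \<and> min_attaining_on T M"
proof -
  have Tl: "clinear T" using T by (simp add: cbounded_linear_iff)
  have TT: "T (T x) = T x" for x using fun_cong[OF idem, of x] by simp
  show ?thesis
  proof (cases "cfinite_dim (range T)")
    case True
    then obtain B where B: "finite B" "cspan B = range T" unfolding cfinite_dim_def by blast
    show ?thesis
    proof (rule norm_min_attaining_on_if_scalar_on_finite_codim[OF T _ _ _ _ M, where c=0])
      show "closed_csubspace {x. T x = 0}"
        using closed_kernel[OF T] csubspace_kernel[OF Tl] by (simp add: closed_csubspace_def)
      show "cfinite_dim V" if V: "csubspace V" "V \<inter> {x. T x = 0} = {0}" for V
      proof (rule cfinite_dim_if_Int_finite_codim_trivial[OF V(1) Tl B(1)])
        show "V \<inter> {x. T x = 0} \<inter> {x. \<forall>b\<in>B. cinner b x = 0} = {0}"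
          using V(2) csubspace_0[OF V(1)] by auto
      qed (simp add: B(2))
    qed simp_all
  next
    case False
    then obtain B where B: "finite B" "cspan B = {x. T x = 0}"
      using finite unfolding cfinite_dim_def by blast
    have IT: "x - T x \<in> cspan B" for x using B(2) TT clinear_diff[OF Tl] by simp
    define N where "N = {x. x - T x = 0} \<inter> {x. \<forall>b\<in>B. cinner b x = 0}"
    show ?thesis
    proof (rule norm_min_attaining_on_if_scalar_on_finite_codim[OF T _ _ _ _ M, where c=1 and N=N])
      show "closed_csubspace N"
        using closed_kernel[OF cbounded_linear_id_minus[OF T]] closed_orthogonal
          csubspace_kernel[OF clinear_id_minus[OF Tl]] csubspace_orthogonal
        by (auto simp: N_def closed_csubspace_def intro: csubspace_Int)
      show "cfinite_dim V" if V: "csubspace V" "V \<inter> N = {0}" for V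
      proof (rule cfinite_dim_if_Int_finite_codim_trivial[OF V(1) clinear_id_minus[OF Tl] B(1)])
        show "range (\<lambda>x. x - T x) \<subseteq> cspan B" using IT by blast
        show "V \<inter> {x. x - T x = 0} \<inter> {x. \<forall>b\<in>B. cinner b x = 0} = {0}"
          using V(2) by (simp add: N_def Int_assoc)
      qed
      show "T y = 1 *\<^sub>C y" if "y \<in> N" for y using that by (simp add: N_def scaleC_one)
      show "cinner (T y) (T z) = 0" if "y \<in> N" "cinner y z = 0" for y z
      proof -
        have "T y = y" "\<And>b. b \<in> B \<Longrightarrow> cinner b y = 0" using that(1) by (auto simp: N_def)
        then show ?thesis
          using cinner_cspan_eq_zero[OF _ IT[of z]] that(2) by (simp add: cinner_diff_right)
      qed
    qed
  qed
qed

section \<open>Non-attainment near idempotents of infinite rank and corank\<close>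

definition joint_orthogonal_complement ::
    "('a::complex_inner \<Rightarrow> 'a) \<Rightarrow> (nat \<Rightarrow> 'a) \<Rightarrow> nat \<Rightarrow> 'a set" where
  "joint_orthogonal_complement S u n =
    {x. \<forall>j<n. cinner (u j) x = 0 \<and> cinner (S (u j)) (S x) = 0}"

lemma joint_orthogonal_complement_cong:
  "(\<And>j. j < n \<Longrightarrow> u j = v j) \<Longrightarrow> joint_orthogonal_complement S u n = joint_orthogonal_complement S v n"
  unfolding joint_orthogonal_complement_def by auto

lemma csubspace_joint_orthogonal_complement:
  "clinear S \<Longrightarrow> csubspace (joint_orthogonal_complement S u n)"
  unfolding csubspace_def joint_orthogonal_complement_def
  by (auto simp: cinner_add_right cinner_scaleC_right clinear_add clinear_scaleC clinear_zero)

lemma infinite_dim_Int_joint_orthogonal_complement: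
  assumes A: "csubspace A" "\<not> cfinite_dim A" and S: "clinear S"
  shows "\<not> cfinite_dim (A \<inter> joint_orthogonal_complement S u n)"
proof (induction n)
  case 0
  then show ?case using A(2) by (simp add: joint_orthogonal_complement_def)
next
  case (Suc n)
  define A1 where "A1 = A \<inter> joint_orthogonal_complement S u n \<inter> {x. cinner (u n) x = 0}"
  have A1: "csubspace A1" "\<not> cfinite_dim A1"
    using A(1) csubspace_joint_orthogonal_complement[OF S] csubspace_kernel[OF clinear_cinner_right]
      infinite_dim_Int_kernel_functional[OF _ clinear_cinner_right Suc.IH]
    unfolding A1_def by (blast intro: csubspace_Int)+
  have "\<not> cfinite_dim (A1 \<inter> {x. (cinner (S (u n)) \<circ> S) x = 0})"
    by (rule infinite_dim_Int_kernel_functional[OF A1(1) clinear_compose[OF S clinear_cinner_right] A1(2)])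
  moreover have "A1 \<inter> {x. (cinner (S (u n)) \<circ> S) x = 0} = A \<inter> joint_orthogonal_complement S u (Suc n)"
    by (auto simp: A1_def joint_orthogonal_complement_def less_Suc_eq)
  ultimately show ?case by simp
qed

text \<open>Intermediate value theorem for the ratio \<open>\<parallel>S x\<parallel> / \<parallel>x\<parallel>\<close> along the segment from
  \<open>a\<close> to \<open>b\<close>.\<close>
lemma exists_unit_norm_image_eq:
  fixes S :: "'a::complex_normed_vector \<Rightarrow> 'b::complex_normed_vector"
  assumes S: "cbounded_linear S" and V: "csubspace V" and ab: "a \<in> V" "b \<in> V"
    and nonzero: "\<And>s. 0 \<le> s \<Longrightarrow> s \<le> 1 \<Longrightarrow> (1 - s) *\<^sub>R a + s *\<^sub>R b \<noteq> 0"
    and a: "norm (S a) \<le> \<tau> * norm a" and b: "\<tau> * norm b \<le> norm (S b)"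
  shows "\<exists>x\<in>V. norm x = 1 \<and> norm (S x) = \<tau>"
proof -
  have Sl: "clinear S" using S by (simp add: cbounded_linear_iff)
  define p where "p s = (1 - s) *\<^sub>R a + s *\<^sub>R b" for s :: real
  define h where "h s = norm (S (p s)) / norm (p s)" for s
  have "continuous_on {0..1} p" unfolding p_def by (intro continuous_intros)
  then have "continuous_on {0..1} h"
    unfolding h_def using nonzero
    by (intro continuous_on_divide continuous_on_norm
        continuous_on_compose2[OF cbounded_linear_continuous_on[OF S]]) (auto simp: p_def)
  moreover have "h 0 \<le> \<tau>" "\<tau> \<le> h 1"
    using nonzero[of 0] nonzero[of 1] a b by (simp_all add: h_def p_def field_simps)
  ultimately obtain s where s: "0 \<le> s" "s \<le> 1" "h s = \<tau>"
    using IVT'[of h 0 \<tau> 1] by auto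
  define x where "x = (1 / norm (p s)) *\<^sub>R p s"
  have "x \<in> V" unfolding x_def p_def using ab V by (intro csubspace_scaleR csubspace_add) auto
  moreover have "norm x = 1" using nonzero[OF s(1,2)] by (simp add: x_def p_def)
  moreover have "norm (S x) = \<tau>"
    using s(3) by (simp add: x_def h_def clinear_scaleR[OF Sl])
  ultimately show ?thesis by blast
qed

locale near_idempotent =
  fixes S T :: "'a::chilbert_space \<Rightarrow> 'a"
  assumes S: "cbounded_linear S" and T: "cbounded_linear T" and idem: "T \<circ> T = T"
    and infinite_rank: "\<not> cfinite_dim (range T)"
    and infinite_corank: "\<not> cfinite_dim {x. T x = 0}"
    and close: "\<And>x. norm (S x - T x) \<le> norm x / 8"
begin

lemma exists_unit_in_joint_orthogonal_complement:
  assumes "1/8 \<le> \<tau>" "\<tau> \<le> 7/8"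
  shows "\<exists>x\<in>joint_orthogonal_complement S u n. norm x = 1 \<and> norm (S x) = \<tau>"
proof -
  have Sl: "clinear S" and Tl: "clinear T" using S T by (simp_all add: cbounded_linear_iff)
  have TT: "T (T x) = T x" for x using fun_cong[OF idem, of x] by simp
  let ?J = "joint_orthogonal_complement S u n"
  have J: "csubspace ?J" by (rule csubspace_joint_orthogonal_complement[OF Sl])
  have "\<not> cfinite_dim ({x. T x = 0} \<inter> ?J)"
    by (rule infinite_dim_Int_joint_orthogonal_complement[OF csubspace_kernel[OF Tl] infinite_corank Sl])
  then have "{x. T x = 0} \<inter> ?J \<noteq> {0}" by (metis cfinite_dim_zero)
  then obtain a where a: "a \<in> ?J" "T a = 0" "norm a = 1"
    using csubspace_has_unit[OF csubspace_Int[OF csubspace_kernel[OF Tl] J]] by blast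
  have "\<not> cfinite_dim (range T \<inter> ?J)"
    by (rule infinite_dim_Int_joint_orthogonal_complement[OF csubspace_image[OF Tl csubspace_UNIV] infinite_rank Sl])
  then have "range T \<inter> ?J \<noteq> {0}" by (metis cfinite_dim_zero)
  then obtain b where b: "b \<in> ?J" "b \<in> range T" "norm b = 1"
    using csubspace_has_unit[OF csubspace_Int[OF csubspace_image[OF Tl csubspace_UNIV] J]] by blast
  have Tb: "T b = b" using b(2) TT by auto
  show ?thesis
  proof (rule exists_unit_norm_image_eq[OF S J a(1) b(1)])
    show "(1 - s) *\<^sub>R a + s *\<^sub>R b \<noteq> 0" if "0 \<le> s" "s \<le> 1" for s
    proof
      assume p0: "(1 - s) *\<^sub>R a + s *\<^sub>R b = 0"
      have "s *\<^sub>R b = T ((1 - s) *\<^sub>R a + s *\<^sub>R b)"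
        using a(2) Tb by (simp add: clinear_add[OF Tl] clinear_scaleR[OF Tl])
      then have "s = 0" using p0 b(3) clinear_zero[OF Tl] by auto
      then show False using p0 a(3) by simp
    qed
    show "norm (S a) \<le> \<tau> * norm a"
      using close[of a] a(2,3) assms by simp
    show "\<tau> * norm b \<le> norm (S b)"
      using close[of b] norm_triangle_ineq2[of b "S b"] Tb b(3) assms by (simp add: norm_minus_commute)
  qed
qed

lemma exists_biorthogonal_sequence:
  fixes t :: "nat \<Rightarrow> real"
  assumes t: "\<And>n. 1/8 \<le> t n \<and> t n \<le> 7/8"
  obtains u where "\<And>n. norm (u n) = 1" "\<And>n. norm (S (u n)) = t n"
    "\<And>i j. i \<noteq> j \<Longrightarrow> cinner (u i) (u j) = 0 \<and> cinner (S (u i)) (S (u j)) = 0"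
proof -
  define P where "P u n x \<longleftrightarrow> x \<in> joint_orthogonal_complement S u n \<and> norm x = 1 \<and> norm (S x) = t n"
    for u n x
  have "\<exists>u. \<forall>n. P u n (u n)"
  proof (rule dependent_wf_choice[OF wf_less])
    show "P u n x = P v n x" if "\<And>j. (j, n) \<in> {(x, y). x < y} \<Longrightarrow> u j = v j" for u v n x
      using joint_orthogonal_complement_cong[of n u v S] that by (simp add: P_def)
    show "\<exists>x. P u n x" for u n
      using exists_unit_in_joint_orthogonal_complement[of "t n" u n] t[of n] unfolding P_def by blast
  qed
  then obtain u where u: "\<And>n. P u n (u n)" by blast
  have "cinner (u i) (u j) = 0 \<and> cinner (S (u i)) (S (u j)) = 0" if "i < j" for i j
    using u[of j] that by (simp add: P_def joint_orthogonal_complement_def)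
  then have orth: "cinner (u i) (u j) = 0 \<and> cinner (S (u i)) (S (u j)) = 0" if "i \<noteq> j" for i j
    using that cinner_eq_zero_commute by (metis linorder_neqE_nat)
  show ?thesis
  proof (rule that)
    show "norm (u n) = 1" "norm (S (u n)) = t n" for n using u[of n] by (simp_all add: P_def)
  qed (fact orth)
qed

end

lemma power2_norm_sum_orthogonal:
  assumes orth: "\<And>i j. i \<noteq> j \<Longrightarrow> cinner (v i) (v j) = 0" and I: "finite I"
  shows "(norm (\<Sum>i\<in>I. a i *\<^sub>C v i))^2 = (\<Sum>i\<in>I. (cmod (a i))^2 * (norm (v i))^2)"
  using I
proof (induction I rule: finite_induct)
  case (insert j I)
  have "cinner (a j *\<^sub>C v j) (a i *\<^sub>C v i) = 0" if "i \<in> I" for i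
    using that insert.hyps(2) orth[of j i] by (auto simp: cinner_scaleC_left cinner_scaleC_right)
  then have "cinner (a j *\<^sub>C v j) (\<Sum>i\<in>I. a i *\<^sub>C v i) = 0"
    by (simp add: cinner_sum_right)
  then have "(norm (\<Sum>i\<in>insert j I. a i *\<^sub>C v i))^2
      = (norm (a j *\<^sub>C v j))^2 + (norm (\<Sum>i\<in>I. a i *\<^sub>C v i))^2"
    using insert.hyps norm_add_Pythagorean_cinner by simp
  then show ?case
    using insert by (simp add: norm_scaleC power_mult_distrib)
qed simp

lemma cinner_orthonormal_sum:
  assumes orth: "\<And>i j. i \<noteq> j \<Longrightarrow> cinner (v i) (v j) = 0" and unit: "\<And>i. norm (v i) = 1"
    and I: "finite I"
  shows "cinner (v k) (\<Sum>i\<in>I. a i *\<^sub>C v i) = (if k \<in> I then a k else 0)"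
proof -
  have "cinner (v k) (\<Sum>i\<in>I. a i *\<^sub>C v i) = (\<Sum>i\<in>I. if i = k then a k else 0)"
    using cinner_self_eq_norm_power2[of "v k"] unit[of k] orth
    by (auto simp: cinner_sum_right cinner_scaleC_right intro!: sum.cong)
  then show ?thesis using I by (simp add: sum.delta')
qed

lemma cspan_range_eq_sum:
  assumes "inj u" and "x \<in> cspan (range u)"
  shows "\<exists>I a. finite I \<and> x = (\<Sum>i\<in>I. a i *\<^sub>C u i)"
proof -
  obtain F c where F: "x = (\<Sum>v\<in>F. c v *\<^sub>C v)" "finite F" "F \<subseteq> range u"
    using assms(2) unfolding cspan_def by blast
  obtain I where I: "finite I" "F = u ` I" using finite_subset_image[OF F(2,3)] by blast
  have "inj_on u I" using assms(1) by (rule inj_on_subset) simp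
  then have "x = (\<Sum>i\<in>I. c (u i) *\<^sub>C u i)"
    using F(1) unfolding I(2) sum.reindex[OF \<open>inj_on u I\<close>] by (simp add: o_def)
  with I(1) show ?thesis by (intro exI[of _ I] exI[of _ "\<lambda>i. c (u i)"]) simp
qed

locale biorthogonal_sequence =
  fixes S :: "'a::chilbert_space \<Rightarrow> 'a" and u :: "nat \<Rightarrow> 'a"
  assumes S: "cbounded_linear S" and unit: "\<And>n. norm (u n) = 1"
    and orth: "\<And>i j. i \<noteq> j \<Longrightarrow> cinner (u i) (u j) = 0 \<and> cinner (S (u i)) (S (u j)) = 0"
begin

definition span_closure :: "'a set" where
  "span_closure = closure (cspan (range u))"

lemma closed_csubspace_span_closure: "closed_csubspace span_closure"
  unfolding span_closure_def by (rule closed_csubspace_closure[OF csubspace_cspan])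

lemma in_span_closure: "u k \<in> span_closure"
proof -
  have "u k \<in> cspan (range u)" unfolding cspan_eq_span by (rule cvs.span_base) simp
  then show ?thesis unfolding span_closure_def using closure_subset by blast
qed

lemma span_closure_nonzero: "span_closure \<noteq> {0}"
proof
  assume "span_closure = {0}"
  then have "u 0 = 0" using in_span_closure[of 0] by simp
  then show False using unit[of 0] by simp
qed

lemma orthogonal: "i \<noteq> j \<Longrightarrow> cinner (u i) (u j) = 0"
  and orthogonal_image: "i \<noteq> j \<Longrightarrow> cinner (S (u i)) (S (u j)) = 0"
  using orth by simp_all

lemma inj_u: "inj u"
proof
  fix i j assume eq: "u i = u j"
  show "i = j"
  proof (rule ccontr)
    assume "i \<noteq> j"
    then have "cinner (u i) (u i) = 0" using orthogonal[of i j] eq by simp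
    then show False using unit[of i] by (simp add: cinner_eq_zero_iff)
  qed
qed

text \<open>On the span of the \<open>u\<^sub>n\<close> the quadratic form
  \<open>L\<^sup>2 \<parallel>x\<parallel>\<^sup>2 - \<parallel>S x\<parallel>\<^sup>2\<close> is diagonal with coefficients \<open>L\<^sup>2 - \<parallel>S u\<^sub>n\<parallel>\<^sup>2\<close>;
  the sign \<open>s\<close> covers both the upper and the lower bound.\<close>
lemma weighted_coefficient_le_cspan:
  assumes w: "\<And>n. 0 \<le> s * (L^2 - (norm (S (u n)))^2)" and x: "x \<in> cspan (range u)"
  shows "s * (L^2 - (norm (S (u k)))^2) * (cmod (cinner (u k) x))^2
    \<le> s * (L^2 * (norm x)^2 - (norm (S x))^2)"
proof -
  obtain I a where I: "finite I" "x = (\<Sum>i\<in>I. a i *\<^sub>C u i)"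
    using cspan_range_eq_sum[OF inj_u x] by blast
  have Sl: "clinear S" using S by (simp add: cbounded_linear_iff)
  have Sx: "S x = (\<Sum>i\<in>I. a i *\<^sub>C S (u i))"
    unfolding I(2) by (simp add: clinear_sum[OF Sl] clinear_scaleC[OF Sl])
  have "(norm x)^2 = (\<Sum>i\<in>I. (cmod (a i))^2)"
    unfolding I(2) using power2_norm_sum_orthogonal[OF orthogonal I(1), where a=a] unit by simp
  moreover have "(norm (S x))^2 = (\<Sum>i\<in>I. (cmod (a i))^2 * (norm (S (u i)))^2)"
    unfolding Sx using power2_norm_sum_orthogonal[OF orthogonal_image I(1), where a=a] by simp
  ultimately have eq: "s * (L^2 * (norm x)^2 - (norm (S x))^2)
      = (\<Sum>i\<in>I. s * (L^2 - (norm (S (u i)))^2) * (cmod (a i))^2)"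
    by (simp add: sum_distrib_left sum_subtractf algebra_simps)
  have nonneg: "0 \<le> s * (L^2 - (norm (S (u i)))^2) * (cmod (a i))^2" for i
    using w[of i] by simp
  have "cinner (u k) x = (if k \<in> I then a k else 0)"
    unfolding I(2) by (rule cinner_orthonormal_sum[OF orthogonal unit I(1)])
  moreover have "s * (L^2 - (norm (S (u k)))^2) * (cmod (a k))^2
      \<le> (\<Sum>i\<in>I. s * (L^2 - (norm (S (u i)))^2) * (cmod (a i))^2)" if "k \<in> I"
    using that I(1) nonneg by (intro member_le_sum) auto
  moreover have "0 \<le> (\<Sum>i\<in>I. s * (L^2 - (norm (S (u i)))^2) * (cmod (a i))^2)"
    using nonneg by (intro sum_nonneg) auto
  ultimately show ?thesis unfolding eq by auto
qed

lemma weighted_coefficient_le: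
  assumes w: "\<And>n. 0 \<le> s * (L^2 - (norm (S (u n)))^2)" and x: "x \<in> span_closure"
  shows "s * (L^2 - (norm (S (u k)))^2) * (cmod (cinner (u k) x))^2
    \<le> s * (L^2 * (norm x)^2 - (norm (S x))^2)"
proof -
  let ?A = "{x. s * (L^2 - (norm (S (u k)))^2) * (cmod (cinner (u k) x))^2
    \<le> s * (L^2 * (norm x)^2 - (norm (S x))^2)}"
  have "closed ?A"
    by (intro closed_Collect_le continuous_intros cbounded_linear_continuous_on[OF S])
  moreover have "cspan (range u) \<subseteq> ?A"
    using weighted_coefficient_le_cspan[OF w] by blast
  ultimately show ?thesis
    using x closure_minimal unfolding span_closure_def by blast
qed

lemma eq_zero_if_orthogonal:
  assumes x: "x \<in> span_closure" and o: "\<And>k. cinner (u k) x = 0"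
  shows "x = 0"
proof -
  have "cspan (range u) \<subseteq> {z. cinner x z = 0}"
    using cinner_cspan_eq_zero[of "range u" x] o by blast
  moreover have "closed {z. cinner x z = 0}"
    by (intro closed_Collect_eq continuous_intros)
  ultimately have "cinner x x = 0" using x closure_minimal unfolding span_closure_def by blast
  then show ?thesis by (simp add: cinner_eq_zero_iff)
qed

lemma weighted_gap_pos:
  assumes w: "\<And>n. 0 < s * (L^2 - (norm (S (u n)))^2)" and x: "x \<in> span_closure" "x \<noteq> 0"
  shows "0 < s * (L^2 * (norm x)^2 - (norm (S x))^2)"
proof -
  obtain k where "cinner (u k) x \<noteq> 0" using eq_zero_if_orthogonal x by blast
  then have "0 < s * (L^2 - (norm (S (u k)))^2) * (cmod (cinner (u k) x))^2"
    using w[of k] by simp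
  also have "\<dots> \<le> s * (L^2 * (norm x)^2 - (norm (S x))^2)"
    using weighted_coefficient_le[OF _ x(1)] w less_imp_le by blast
  finally show ?thesis .
qed

lemma not_norm_attaining_on_span_closure:
  assumes below: "\<And>n. norm (S (u n)) < L" and lim: "(\<lambda>n. norm (S (u n))) \<longlonglongrightarrow> L"
  shows "\<not> norm_attaining_on S span_closure"
proof -
  define X where "X = {norm (S x) |x. x \<in> span_closure \<and> norm x = 1}"
  have "0 \<le> L" using below[of 0] norm_ge_zero by (metis order.trans less_imp_le)
  have "(norm (S (u n)))^2 < L^2" for n using below[of n] by (intro power_strict_mono) auto
  then have w: "0 < 1 * (L^2 - (norm (S (u n)))^2)" for n by simp
  have less: "norm (S x) < L" if x: "x \<in> span_closure" "norm x = 1" for x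
  proof -
    have "x \<noteq> 0" using x(2) by auto
    then have "0 < 1 * (L^2 * (norm x)^2 - (norm (S x))^2)" by (rule weighted_gap_pos[OF w x(1)])
    then have "(norm (S x))^2 < L^2" using x(2) by simp
    then show ?thesis by (rule power2_less_imp_less) fact
  qed
  have X: "norm (S (u n)) \<in> X" for n using in_span_closure unit by (auto simp: X_def)
  have le: "v \<le> L" if v: "v \<in> X" for v
  proof -
    obtain x where "x \<in> span_closure" "norm x = 1" "v = norm (S x)" using v unfolding X_def by blast
    then show ?thesis using less[of x] by simp
  qed
  have "Sup X = L"
  proof (rule antisym)
    show "Sup X \<le> L" using X le by (intro cSup_least) auto
    have "bdd_above X" using le by (rule bdd_aboveI)
    then show "L \<le> Sup X" using X cSup_upper by (intro LIMSEQ_le_const2[OF lim]) blast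
  qed
  show ?thesis
  proof
    assume "norm_attaining_on S span_closure"
    then obtain x where "x \<in> span_closure" "norm x = 1" "norm (S x) = Sup X"
      unfolding norm_attaining_on_def norm_on_def X_def by blast
    then show False using less[of x] \<open>Sup X = L\<close> by simp
  qed
qed

lemma not_min_attaining_on_span_closure:
  assumes above: "\<And>n. L < norm (S (u n))" and lim: "(\<lambda>n. norm (S (u n))) \<longlonglongrightarrow> L" and L: "0 \<le> L"
  shows "\<not> min_attaining_on S span_closure"
proof -
  define X where "X = {norm (S x) |x. x \<in> span_closure \<and> norm x = 1}"
  have "L^2 < (norm (S (u n)))^2" for n using above[of n] L by (intro power_strict_mono) auto
  then have w: "0 < (-1) * (L^2 - (norm (S (u n)))^2)" for n by simp
  have greater: "L < norm (S x)" if x: "x \<in> span_closure" "norm x = 1" for x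
  proof -
    have "x \<noteq> 0" using x(2) by auto
    then have "0 < (-1) * (L^2 * (norm x)^2 - (norm (S x))^2)" by (rule weighted_gap_pos[OF w x(1)])
    then have "L^2 < (norm (S x))^2" using x(2) by simp
    then show ?thesis by (rule power2_less_imp_less) simp
  qed
  have X: "norm (S (u n)) \<in> X" for n using in_span_closure unit by (auto simp: X_def)
  have ge: "L \<le> v" if v: "v \<in> X" for v
  proof -
    obtain x where "x \<in> span_closure" "norm x = 1" "v = norm (S x)" using v unfolding X_def by blast
    then show ?thesis using greater[of x] by simp
  qed
  have "Inf X = L"
  proof (rule antisym)
    have "bdd_below X" using ge by (rule bdd_belowI)
    then show "Inf X \<le> L" using X cInf_lower by (intro LIMSEQ_le_const[OF lim]) blast
    show "L \<le> Inf X" using X ge by (intro cInf_greatest) auto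
  qed
  show ?thesis
  proof
    assume "min_attaining_on S span_closure"
    then obtain x where "x \<in> span_closure" "norm x = 1" "norm (S x) = Inf X"
      unfolding min_attaining_on_def min_modulus_on_def X_def by blast
    then show False using greater[of x] \<open>Inf X = L\<close> by simp
  qed
qed

end

context near_idempotent
begin

lemma not_in_AN: "S \<notin> AN"
proof
  assume "S \<in> AN"
  define t where "t n = 1/2 - inverse (real (Suc n)) / 4" for n
  have inv: "0 < inverse (real (Suc n))" "inverse (real (Suc n)) \<le> 1" for n
    by (simp_all add: inverse_le_1_iff)
  have t: "1/8 \<le> t n" "t n \<le> 7/8" "t n < 1/2" for n
    using inv[of n] unfolding t_def by linarith+
  obtain u where u: "\<And>n. norm (u n) = 1" "\<And>n. norm (S (u n)) = t n"
    "\<And>i j. i \<noteq> j \<Longrightarrow> cinner (u i) (u j) = 0 \<and> cinner (S (u i)) (S (u j)) = 0"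
    by (rule exists_biorthogonal_sequence[of t]) (use t(1,2) in auto)
  interpret biorthogonal_sequence S u by (rule biorthogonal_sequence.intro[OF S u(1) u(3)])
  have "t \<longlonglongrightarrow> 1/2"
    unfolding t_def using tendsto_diff[OF tendsto_const tendsto_divide_zero[OF LIMSEQ_inverse_real_of_nat]]
    by simp
  then have "\<not> norm_attaining_on S span_closure"
    using not_norm_attaining_on_span_closure[of "1/2"] t(3) u(2) by simp
  then show False
    using \<open>S \<in> AN\<close> closed_csubspace_span_closure span_closure_nonzero by (simp add: AN_def)
qed

lemma not_in_AM: "S \<notin> AM"
proof
  assume "S \<in> AM"
  define t where "t n = 1/2 + inverse (real (Suc n)) / 4" for n
  have inv: "0 < inverse (real (Suc n))" "inverse (real (Suc n)) \<le> 1" for n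
    by (simp_all add: inverse_le_1_iff)
  have t: "1/8 \<le> t n" "t n \<le> 7/8" "1/2 < t n" for n
    using inv[of n] unfolding t_def by linarith+
  obtain u where u: "\<And>n. norm (u n) = 1" "\<And>n. norm (S (u n)) = t n"
    "\<And>i j. i \<noteq> j \<Longrightarrow> cinner (u i) (u j) = 0 \<and> cinner (S (u i)) (S (u j)) = 0"
    by (rule exists_biorthogonal_sequence[of t]) (use t(1,2) in auto)
  interpret biorthogonal_sequence S u by (rule biorthogonal_sequence.intro[OF S u(1) u(3)])
  have "t \<longlonglongrightarrow> 1/2"
    unfolding t_def using tendsto_add[OF tendsto_const tendsto_divide_zero[OF LIMSEQ_inverse_real_of_nat]]
    by simp
  then have "\<not> min_attaining_on S span_closure"
    using not_min_attaining_on_span_closure[of "1/2"] t(3) u(2) by simp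
  then show False
    using \<open>S \<in> AM\<close> closed_csubspace_span_closure span_closure_nonzero by (simp add: AM_def)
qed

end

lemma AN_subset_AN_closure: "AN \<subseteq> AN_closure"
  unfolding AN_closure_def by (auto simp: AN_def onorm_zero intro!: bexI)

lemma AN_closure_approximation:
  assumes "T \<in> AN_closure" "e > 0"
  obtains S where "S \<in> AN" "\<And>x. norm (S x - T x) \<le> e * norm x"
proof -
  obtain S where S: "S \<in> AN" "onorm (\<lambda>x. T x - S x) < e"
    using assms by (auto simp: AN_closure_def)
  have "bounded_linear (\<lambda>x. T x - S x)"
    using assms(1) S(1) by (intro bounded_linear_sub) (auto simp: AN_closure_def AN_def cbounded_linear_iff)
  then have "norm (T x - S x) \<le> e * norm x" for x
    using onorm[of "\<lambda>x. T x - S x" x] mult_right_mono[OF less_imp_le[OF S(2)] norm_ge_zero[of x]]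
    by simp
  then show ?thesis using that S(1) by (simp add: norm_minus_commute)
qed

lemma idempotent_in_AN_AM:
  fixes T :: "'a::chilbert_space \<Rightarrow> 'a"
  assumes "cbounded_linear T" "T \<circ> T = T" "cfinite_dim (range T) \<or> cfinite_dim {x. T x = 0}"
  shows "T \<in> AN \<and> T \<in> AM"
  using idempotent_norm_min_attaining_on[OF assms] assms(1) by (simp add: AN_def AM_def)

theorem theorem6p1:
  fixes T :: "'a::chilbert_space \<Rightarrow> 'a"
  assumes "\<not> cfinite_dim (UNIV :: 'a set)"
    and "separable_H TYPE('a)"
    and "cbounded_linear T"
    and "T \<circ> T = T"
  shows "(T \<in> AN \<longleftrightarrow> cfinite_dim (range T) \<or> cfinite_dim {x. T x = 0})
       \<and> (cfinite_dim (range T) \<or> cfinite_dim {x. T x = 0} \<longleftrightarrow> T \<in> AM)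
       \<and> (T \<in> AM \<longleftrightarrow> T \<in> AN_closure)"
proof -
  let ?finite = "cfinite_dim (range T) \<or> cfinite_dim {x. T x = 0}"
  have near: "near_idempotent S T"
    if "cbounded_linear S" "\<not> ?finite" "\<And>x. norm (S x - T x) \<le> norm x / 8" for S
    using that assms(3,4) by (simp add: near_idempotent_def)
  have "?finite \<Longrightarrow> T \<in> AN \<and> T \<in> AM"
    by (rule idempotent_in_AN_AM[OF assms(3,4)])
  moreover have "T \<in> AM \<Longrightarrow> ?finite"
    using near_idempotent.not_in_AM[OF near[OF assms(3)]] by auto
  moreover have "T \<in> AN_closure \<Longrightarrow> ?finite"
  proof -
    assume "T \<in> AN_closure"
    then obtain S where "S \<in> AN" "\<And>x. norm (S x - T x) \<le> 1/8 * norm x"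
      using AN_closure_approximation[of T "1/8"] by auto
    then show ?finite
      using near_idempotent.not_in_AN[OF near] by (auto simp: AN_def)
  qed
  ultimately show ?thesis using AN_subset_AN_closure by blast
qed

end
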